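(* Let $G_1$ and $G_2$ be two vertex-disjoint simple connected graphs with $|V(G_1)|=n_1$, $|V(G_2)|=n_2$, $|E(G_1)|=m_1$, $|E(G_2)|=m_2$. Then the vertex R-join $G_1\dot{\vee}_R G_2$ satisfies \[ F(G_1\dot{\vee}_R G_2)=8F(G_1)+F(G_2)+12n_2M_1(G_1)+3n_1M_1(G_2)+12m_1n_2^{2}+6m_2n_1^{2}+n_1n_2(n_1^2+n_2^2)+8m_1 . \]
   Context: For a simple graph $G$ and $v\in V(G)$, $d_G(v)$ is the degree of $v$. The first Zagreb index is $M_1(G)=\sum_{v\in V(G)}d_G(v)^2$ and the F-index is $F(G)=\sum_{v\in V(G)}d_G(v)^3$. The graph $R(G)$ is obtained from $G$ by inserting a new vertex into each edge of $G$ and joining each new vertex to the two end vertices of the corresponding edge (so the original edges of $G$ are kept); let $I(G)$ denote the set of these new vertices, so $V(R(G))=V(G)\cup I(G)$. The vertex R-join $G_1\dot{\vee}_R G_2$ is the graph obtained from $R(G_1)$ and $G_2$ (taken vertex-disjoint) by joining each vertex of $V(G_1)$ to every vertex of $G_2$ by an edge. *)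

theory Defs
  imports Main
begin

definition simple_graph :: "'a set \<Rightarrow> 'a set set \<Rightarrow> bool" where
  "simple_graph V E \<longleftrightarrow> finite V \<and>
     (\<forall>e\<in>E. \<exists>u v. u \<in> V \<and> v \<in> V \<and> u \<noteq> v \<and> e = {u, v})"

definition graph_connected :: "'a set \<Rightarrow> 'a set set \<Rightarrow> bool" where
  "graph_connected V E \<longleftrightarrow> V \<noteq> {} \<and>
     (\<forall>u\<in>V. \<forall>v\<in>V. (u, v) \<in> {(x, y). {x, y} \<in> E}\<^sup>*)"

definition degree :: "'a set set \<Rightarrow> 'a \<Rightarrow> nat" where
  "degree E v = card {e \<in> E. v \<in> e}"

definition zagreb1 :: "'a set \<Rightarrow> 'a set set \<Rightarrow> nat" where
  "zagreb1 V E = (\<Sum>v\<in>V. degree E v ^ 2)"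

definition findex :: "'a set \<Rightarrow> 'a set set \<Rightarrow> nat" where
  "findex V E = (\<Sum>v\<in>V. degree E v ^ 3)"

definition R_vertices :: "'a set \<Rightarrow> 'a set set \<Rightarrow> ('a + 'a set) set" where
  "R_vertices V E = Inl ` V \<union> Inr ` E"

definition R_edges :: "'a set set \<Rightarrow> ('a + 'a set) set set" where
  "R_edges E = (\<lambda>e. Inl ` e) ` E \<union> {{Inl u, Inr e} | u e. e \<in> E \<and> u \<in> e}"

definition Rjoin_vertices ::
  "'a set \<Rightarrow> 'a set set \<Rightarrow> 'b set \<Rightarrow> (('a + 'a set) + 'b) set" where
  "Rjoin_vertices V1 E1 V2 = Inl ` R_vertices V1 E1 \<union> Inr ` V2"

definition Rjoin_edges ::
  "'a set \<Rightarrow> 'a set set \<Rightarrow> 'b set \<Rightarrow> 'b set set \<Rightarrow> (('a + 'a set) + 'b) set set" where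
  "Rjoin_edges V1 E1 V2 E2 =
     (\<lambda>e. Inl ` e) ` R_edges E1 \<union> (\<lambda>e. Inr ` e) ` E2 \<union>
     {{Inl (Inl u), Inr w} | u w. u \<in> V1 \<and> w \<in> V2}"

end

theory Submission
  imports Defs
begin

text \<open>In the R-join an old vertex v of G1 keeps its d(v) edges of G1, gains one edge to
  each of the d(v) subdivision vertices of its incident edges and one edge to each of the
  n2 vertices of G2, so it has degree 2 d(v) + n2. A subdivision vertex has degree 2 and a
  vertex w of G2 has degree d(w) + n1. Expanding the cubes and using the handshake lemma
  for the linear terms gives the formula.\<close>

lemma simple_graph_finite_edges:
  assumes "simple_graph V E"
  shows "finite E"
proof -
  have "E \<subseteq> Pow V" using assms unfolding simple_graph_def by fastforce
  moreover have "finite V" using assms unfolding simple_graph_def by simp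
  ultimately show ?thesis by (rule finite_subset[OF _ finite_Pow_iff[THEN iffD2]])
qed

lemma simple_graph_edgeD:
  assumes "simple_graph V E" and "e \<in> E"
  shows "card e = 2" and "e \<subseteq> V"
  using assms unfolding simple_graph_def by auto

lemma sum_degree_eq_twice_card_edges:
  assumes "simple_graph V E"
  shows "(\<Sum>v\<in>V. degree E v) = 2 * card E"
proof -
  have fV: "finite V" using assms unfolding simple_graph_def by simp
  have fE: "finite E" using simple_graph_finite_edges[OF assms] .
  have "(\<Sum>v\<in>V. degree E v) = (\<Sum>v\<in>V. \<Sum>e\<in>E. if v \<in> e then 1 else (0::nat))"
    unfolding degree_def using fE by (simp add: sum.If_cases Int_def)
  also have "\<dots> = (\<Sum>e\<in>E. \<Sum>v\<in>V. if v \<in> e then 1 else (0::nat))"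
    by (rule sum.swap)
  also have "\<dots> = (\<Sum>e\<in>E. card (V \<inter> e))"
    using fV by (simp add: sum.If_cases)
  also have "\<dots> = (\<Sum>e\<in>E. 2)"
    using simple_graph_edgeD[OF assms] by (intro sum.cong) (auto simp: Int_absorb1)
  finally show ?thesis by simp
qed

lemma sum_affine_degree_cube:
  assumes "simple_graph V E"
  shows "(\<Sum>v\<in>V. (a * degree E v + k) ^ 3) =
    a ^ 3 * findex V E + 3 * a ^ 2 * k * zagreb1 V E + 6 * a * k ^ 2 * card E + card V * k ^ 3"
proof -
  have "(\<Sum>v\<in>V. (a * degree E v + k) ^ 3) =
      (\<Sum>v\<in>V. a ^ 3 * degree E v ^ 3 + 3 * a ^ 2 * k * degree E v ^ 2
               + 3 * a * k ^ 2 * degree E v + k ^ 3)"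
    by (intro sum.cong) (simp_all add: power3_eq_cube power2_eq_square algebra_simps)
  also have "\<dots> = a ^ 3 * findex V E + 3 * a ^ 2 * k * zagreb1 V E
      + 3 * a * k ^ 2 * (\<Sum>v\<in>V. degree E v) + card V * k ^ 3"
    by (simp add: sum.distrib sum_distrib_left findex_def zagreb1_def)
  finally show ?thesis
    by (simp add: sum_degree_eq_twice_card_edges[OF assms])
qed

lemma sum_Rjoin_vertices:
  assumes "finite V1" and "finite E1" and "finite V2"
  shows "(\<Sum>x\<in>Rjoin_vertices V1 E1 V2. f x) =
    (\<Sum>v\<in>V1. f (Inl (Inl v))) + (\<Sum>e\<in>E1. f (Inl (Inr e))) + (\<Sum>w\<in>V2. f (Inr w))"
proof -
  have split: "Rjoin_vertices V1 E1 V2 = ((Inl \<circ> Inl) ` V1 \<union> (Inl \<circ> Inr) ` E1) \<union> Inr ` V2"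
    by (auto simp: Rjoin_vertices_def R_vertices_def)
  have disjoint_old_new: "(Inl \<circ> Inl) ` V1 \<inter> (Inl \<circ> Inr) ` E1 = {}"
    and disjoint_left_right: "((Inl \<circ> Inl) ` V1 \<union> (Inl \<circ> Inr) ` E1) \<inter> Inr ` V2 = {}"
    by auto
  have "(\<Sum>x\<in>Rjoin_vertices V1 E1 V2. f x) =
      (\<Sum>x\<in>(Inl \<circ> Inl) ` V1. f x) + (\<Sum>x\<in>(Inl \<circ> Inr) ` E1. f x) + (\<Sum>x\<in>Inr ` V2. f x)"
    unfolding split
    using assms sum.union_disjoint[OF _ _ disjoint_left_right, of f]
      sum.union_disjoint[OF _ _ disjoint_old_new, of f]
    by simp
  also have "\<dots> = (\<Sum>v\<in>V1. f (Inl (Inl v))) + (\<Sum>e\<in>E1. f (Inl (Inr e))) + (\<Sum>w\<in>V2. f (Inr w))"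
    by (simp add: sum.reindex inj_on_def)
  finally show ?thesis .
qed

lemma degree_Rjoin_old_vertex:
  assumes "simple_graph V1 E1" and "simple_graph V2 E2" and "v \<in> V1"
  shows "degree (Rjoin_edges V1 E1 V2 E2) (Inl (Inl v)) = 2 * degree E1 v + card V2"
proof -
  let ?inc = "{e \<in> E1. v \<in> e}"
  let ?old = "(\<lambda>e. Inl ` Inl ` e) ` ?inc :: (('a + 'a set) + 'b) set set"
  let ?sub = "(\<lambda>e. {Inl (Inl v), Inl (Inr e)}) ` ?inc :: (('a + 'a set) + 'b) set set"
  let ?join = "(\<lambda>w. {Inl (Inl v), Inr w}) ` V2 :: (('a + 'a set) + 'b) set set"
  have incident: "{e \<in> Rjoin_edges V1 E1 V2 E2. Inl (Inl v) \<in> e} = ?old \<union> ?sub \<union> ?join"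
  proof (intro equalityI subsetI)
    fix x assume "x \<in> ?old \<union> ?sub \<union> ?join"
    then consider (old) e where "e \<in> E1" "x = Inl ` Inl ` e"
      | (sub) e where "e \<in> E1" "v \<in> e" "x = Inl ` {Inl v, Inr e}"
      | (join) w where "w \<in> V2" "x = {Inl (Inl v), Inr w}"
      by auto
    then have "x \<in> Rjoin_edges V1 E1 V2 E2"
    proof cases
      case sub
      then have "{Inl v, Inr e} \<in> R_edges E1" unfolding R_edges_def by blast
      with sub show ?thesis unfolding Rjoin_edges_def by blast
    qed (use assms(3) in \<open>auto simp: Rjoin_edges_def R_edges_def\<close>)
    moreover have "Inl (Inl v) \<in> x" using \<open>x \<in> ?old \<union> ?sub \<union> ?join\<close> by auto
    ultimately show "x \<in> {e \<in> Rjoin_edges V1 E1 V2 E2. Inl (Inl v) \<in> e}" by simp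
  qed (use assms(3) in \<open>auto simp: Rjoin_edges_def R_edges_def image_iff\<close>)
  have "finite ?inc" using simple_graph_finite_edges[OF assms(1)] by simp
  moreover have "finite V2" using assms(2) unfolding simple_graph_def by simp
  moreover have "inj_on (\<lambda>e. Inl ` Inl ` e :: (('a + 'a set) + 'b) set) ?inc"
    by (rule inj_onI) (simp add: inj_image_eq_iff inj_def)
  moreover have "inj_on (\<lambda>e. {Inl (Inl v), Inl (Inr e)} :: (('a + 'a set) + 'b) set) ?inc"
    by (rule inj_onI) (auto simp: doubleton_eq_iff)
  moreover have "inj_on (\<lambda>w. {Inl (Inl v), Inr w} :: (('a + 'a set) + 'b) set) V2"
    by (rule inj_onI) (auto simp: doubleton_eq_iff)
  moreover have "?old \<inter> ?sub = {}" and "(?old \<union> ?sub) \<inter> ?join = {}" by auto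
  ultimately show ?thesis
    unfolding degree_def incident by (simp add: card_Un_disjoint card_image)
qed

lemma degree_Rjoin_subdivision_vertex:
  fixes V2 :: "'b set" and E2 :: "'b set set"
  assumes "simple_graph V1 E1" and "e \<in> E1"
  shows "degree (Rjoin_edges V1 E1 V2 E2) (Inl (Inr e)) = 2"
proof -
  have incident: "{x \<in> Rjoin_edges V1 E1 V2 E2. Inl (Inr e) \<in> x} =
      (\<lambda>u. {Inl (Inl u), Inl (Inr e)} :: (('a + 'a set) + 'b) set) ` e"
  proof (intro equalityI subsetI)
    fix x :: "(('a + 'a set) + 'b) set"
    assume "x \<in> (\<lambda>u. {Inl (Inl u), Inl (Inr e)}) ` e"
    then obtain u where u: "u \<in> e" "x = Inl ` {Inl u, Inr e}" by auto
    then have "{Inl u, Inr e} \<in> R_edges E1" unfolding R_edges_def using assms(2) by blast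
    with u show "x \<in> {x \<in> Rjoin_edges V1 E1 V2 E2. Inl (Inr e) \<in> x}"
      unfolding Rjoin_edges_def by blast
  qed (use assms(2) in \<open>auto simp: Rjoin_edges_def R_edges_def image_iff\<close>)
  have "inj_on (\<lambda>u. {Inl (Inl u), Inl (Inr e)} :: (('a + 'a set) + 'b) set) e"
    by (rule inj_onI) (auto simp: doubleton_eq_iff)
  then show ?thesis
    unfolding degree_def incident using simple_graph_edgeD(1)[OF assms] by (simp add: card_image)
qed

lemma degree_Rjoin_right_vertex:
  assumes "simple_graph V1 E1" and "simple_graph V2 E2" and "w \<in> V2"
  shows "degree (Rjoin_edges V1 E1 V2 E2) (Inr w) = degree E2 w + card V1"
proof -
  let ?inc = "{e \<in> E2. w \<in> e}"
  let ?own = "(\<lambda>e. Inr ` e) ` ?inc :: (('a + 'a set) + 'b) set set"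
  let ?join = "(\<lambda>u. {Inl (Inl u), Inr w}) ` V1 :: (('a + 'a set) + 'b) set set"
  have incident: "{e \<in> Rjoin_edges V1 E1 V2 E2. Inr w \<in> e} = ?own \<union> ?join"
    unfolding Rjoin_edges_def R_edges_def using assms(3) by (auto simp: image_iff)
  have "finite ?inc" using simple_graph_finite_edges[OF assms(2)] by simp
  moreover have "finite V1" using assms(1) unfolding simple_graph_def by simp
  moreover have "inj_on (\<lambda>e. Inr ` e :: (('a + 'a set) + 'b) set) ?inc"
    by (rule inj_onI) (simp add: inj_image_eq_iff inj_def)
  moreover have "inj_on (\<lambda>u. {Inl (Inl u), Inr w} :: (('a + 'a set) + 'b) set) V1"
    by (rule inj_onI) (auto simp: doubleton_eq_iff)
  moreover have "?own \<inter> ?join = {}" by auto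
  ultimately show ?thesis
    unfolding degree_def incident by (simp add: card_Un_disjoint card_image)
qed

theorem theorem3:
  fixes V1 :: "'a set" and E1 :: "'a set set" and V2 :: "'b set" and E2 :: "'b set set"
  assumes "simple_graph V1 E1" and "graph_connected V1 E1"
    and "simple_graph V2 E2" and "graph_connected V2 E2"
  shows "findex (Rjoin_vertices V1 E1 V2) (Rjoin_edges V1 E1 V2 E2) =
     8 * findex V1 E1 + findex V2 E2
     + 12 * card V2 * zagreb1 V1 E1 + 3 * card V1 * zagreb1 V2 E2
     + 12 * card E1 * card V2 ^ 2 + 6 * card E2 * card V1 ^ 2
     + card V1 * card V2 * (card V1 ^ 2 + card V2 ^ 2) + 8 * card E1"
proof -
  note G1 = assms(1) and G2 = assms(3)
  let ?E = "Rjoin_edges V1 E1 V2 E2"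
  have "finite V1" "finite V2" using G1 G2 unfolding simple_graph_def by simp_all
  then have "findex (Rjoin_vertices V1 E1 V2) ?E =
      (\<Sum>v\<in>V1. (2 * degree E1 v + card V2) ^ 3) + (\<Sum>e\<in>E1. 2 ^ 3)
      + (\<Sum>w\<in>V2. (1 * degree E2 w + card V1) ^ 3)"
    unfolding findex_def
    using simple_graph_finite_edges[OF G1] degree_Rjoin_old_vertex[OF G1 G2]
      degree_Rjoin_subdivision_vertex[OF G1, of _ V2 E2] degree_Rjoin_right_vertex[OF G1 G2]
    by (simp add: sum_Rjoin_vertices)
  also have "\<dots> = 8 * findex V1 E1 + 12 * card V2 * zagreb1 V1 E1
      + 12 * card E1 * card V2 ^ 2 + card V1 * card V2 ^ 3 + 8 * card E1
      + (findex V2 E2 + 3 * card V1 * zagreb1 V2 E2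
         + 6 * card E2 * card V1 ^ 2 + card V2 * card V1 ^ 3)"
    unfolding sum_affine_degree_cube[OF G1] sum_affine_degree_cube[OF G2] by simp
  finally show ?thesis
    by (simp add: power2_eq_square power3_eq_cube algebra_simps)
qed

end
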